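(* Let $2\le\gamma\le17$ and consider the SIEMS6 method ($\mathrm{k}=6$) with coefficients defined as in the context. Then $\sigma_{\mathrm{F}}=1$, $$\sigma_{\mathrm{E}}=\frac{15(32\gamma^5+80\gamma^4-80\gamma^3+40\gamma^2-10\gamma+1)}{16(30\gamma^5-50\gamma^3+50\gamma^2-20\gamma+3)},\quad\lambda_{\mathrm{I}}=\frac{15(2\gamma-1)^5}{16(30\gamma^5-50\gamma^3+50\gamma^2-20\gamma+3)},$$ so that $\mathfrak{I}_{\mathrm{IE}}=\dfrac{(2\gamma-1)^5}{32\gamma^5+80\gamma^4-80\gamma^3+40\gamma^2-10\gamma+1}$.
   Context: The $\gamma$-parameterized SIEMS-$\mathrm{k}$ method has coefficients $a_j$ ($0\le j\le\mathrm{k}-1$), $b_j$ ($0\le j\le\mathrm{k}$), $c_j$ ($0\le j\le\mathrm{k}-1$) determined by the polynomial identities (in $\zeta$) $\sum_{j=0}^{\mathrm{k}-1}a_j\zeta^{\mathrm{k}-j-1}=\sum_{j=1}^{\mathrm{k}}\frac{f^{(j)}(1)}{j!}(\zeta-1)^{j-1}$ with $f(z)=(\gamma z-\gamma+1)^{\mathrm{k}-1}z\ln z$; $\sum_{j=0}^{\mathrm{k}}b_j\zeta^{\mathrm{k}-j}=\zeta(\gamma\zeta-\gamma+1)^{\mathrm{k}-1}$; $\sum_{j=0}^{\mathrm{k}-1}c_j\zeta^{\mathrm{k}-j-1}=\zeta(\gamma\zeta-\gamma+1)^{\mathrm{k}-1}-\gamma^{\mathrm{k}-1}(\zeta-1)^{\mathrm{k}}$.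 Define $a(\theta)=\sum_j a_je^{\imath j\theta}$, $b(\theta)=\sum_j b_je^{\imath j\theta}$, $c(\theta)=\sum_jc_je^{\imath j\theta}$, $\sigma_{\mathrm{F}}=\max_{\theta\in[0,2\pi)}|1/a(\theta)|$, $\sigma_{\mathrm{E}}=\max_{\theta\in[0,2\pi)}|c(\theta)/a(\theta)|$, $\lambda_{\mathrm{I}}=\min_{\theta\in[0,2\pi)}\Re[b(\theta)/a(\theta)]$, $\mathfrak{I}_{\mathrm{IE}}=\lambda_{\mathrm{I}}/\sigma_{\mathrm{E}}$. *)

theory Defs
  imports "HOL-Analysis.Analysis" "HOL-Computational_Algebra.Polynomial"
begin

definition siems_f :: "real \<Rightarrow> nat \<Rightarrow> real \<Rightarrow> real" where
  "siems_f \<gamma> k z = (\<gamma> * z - \<gamma> + 1) ^ (k - 1) * z * ln z"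

definition siems_A_poly :: "real \<Rightarrow> nat \<Rightarrow> real poly" where
  "siems_A_poly \<gamma> k =
     (\<Sum>j=1..k. smult (((deriv ^^ j) (siems_f \<gamma> k) 1) / fact j) ([:-1, 1:] ^ (j - 1)))"

definition siems_B_poly :: "real \<Rightarrow> nat \<Rightarrow> real poly" where
  "siems_B_poly \<gamma> k = [:0, 1:] * [:1 - \<gamma>, \<gamma>:] ^ (k - 1)"

definition siems_C_poly :: "real \<Rightarrow> nat \<Rightarrow> real poly" where
  "siems_C_poly \<gamma> k = siems_B_poly \<gamma> k - smult (\<gamma> ^ (k - 1)) ([:-1, 1:] ^ k)"

definition siems_a_coef :: "real \<Rightarrow> nat \<Rightarrow> nat \<Rightarrow> real" where
  "siems_a_coef \<gamma> k j = coeff (siems_A_poly \<gamma> k) (k - j - 1)"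

definition siems_b_coef :: "real \<Rightarrow> nat \<Rightarrow> nat \<Rightarrow> real" where
  "siems_b_coef \<gamma> k j = coeff (siems_B_poly \<gamma> k) (k - j)"

definition siems_c_coef :: "real \<Rightarrow> nat \<Rightarrow> nat \<Rightarrow> real" where
  "siems_c_coef \<gamma> k j = coeff (siems_C_poly \<gamma> k) (k - j - 1)"

definition siems_a :: "real \<Rightarrow> nat \<Rightarrow> real \<Rightarrow> complex" where
  "siems_a \<gamma> k \<theta> = (\<Sum>j<k. of_real (siems_a_coef \<gamma> k j) * exp (\<i> * of_nat j * of_real \<theta>))"

definition siems_b :: "real \<Rightarrow> nat \<Rightarrow> real \<Rightarrow> complex" where
  "siems_b \<gamma> k \<theta> = (\<Sum>j\<le>k. of_real (siems_b_coef \<gamma> k j) * exp (\<i> * of_nat j * of_real \<theta>))"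

definition siems_c :: "real \<Rightarrow> nat \<Rightarrow> real \<Rightarrow> complex" where
  "siems_c \<gamma> k \<theta> = (\<Sum>j<k. of_real (siems_c_coef \<gamma> k j) * exp (\<i> * of_nat j * of_real \<theta>))"

definition sigma_F :: "real \<Rightarrow> nat \<Rightarrow> real" where
  "sigma_F \<gamma> k = (SUP \<theta>\<in>{0..<2*pi}. cmod (1 / siems_a \<gamma> k \<theta>))"

definition sigma_E :: "real \<Rightarrow> nat \<Rightarrow> real" where
  "sigma_E \<gamma> k = (SUP \<theta>\<in>{0..<2*pi}. cmod (siems_c \<gamma> k \<theta> / siems_a \<gamma> k \<theta>))"

definition lambda_I :: "real \<Rightarrow> nat \<Rightarrow> real" where
  "lambda_I \<gamma> k = (INF \<theta>\<in>{0..<2*pi}. Re (siems_b \<gamma> k \<theta> / siems_a \<gamma> k \<theta>))"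

definition I_IE :: "real \<Rightarrow> nat \<Rightarrow> real" where
  "I_IE \<gamma> k = lambda_I \<gamma> k / sigma_E \<gamma> k"

end

theory Submission
  imports Defs
begin

(* Since f(z) = B(z) ln z, where B is the polynomial defining the b_j, the Taylor coefficients
   of f at 1 follow from the closed form of the j-th derivative of p(z) ln z: it is
   p^(j)(z) ln z + r_j(z) / z^j with polynomials r_j given by a simple recursion.
   For real coefficients w_j, the real and imaginary parts of sum_j w_j e^(i j theta) are
   sum_j w_j T_j(x) and sin theta * sum_j w_j U_(j-1)(x) with x = cos theta, so |a|^2, |c|^2 and
   Re(b conj a) are polynomials in x on [-1, 1].  Each claimed extremum then reduces to the
   nonnegativity of an explicit polynomial in x and s = gamma - 2 >= 0, which is certified by
   writing it in the Bernstein basis (1 + x)^i (1 - x)^(4-i) with coefficients that are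
   polynomials in s with nonnegative coefficients.  A factor 1 - x (resp. 1 + x) of that
   polynomial shows that the extremum is attained at theta = 0 (resp. theta = pi). *)

section \<open>Taylor coefficients of a polynomial times the logarithm\<close>

fun ln_remainder :: "real poly \<Rightarrow> nat \<Rightarrow> real poly" where
  "ln_remainder p 0 = 0"
| "ln_remainder p (Suc j) =
     [:0, 1:] ^ j * (pderiv ^^ j) p + pCons 0 (pderiv (ln_remainder p j))
       - smult (of_nat j) (ln_remainder p j)"

lemma has_real_derivative_poly_ln_plus_poly_div_power:
  fixes p r :: "real poly"
  assumes "0 < x"
  shows "((\<lambda>y. poly p y * ln y + poly r y / y ^ n) has_real_derivative
           poly (pderiv p) x * ln x
           + poly ([:0, 1:] ^ n * p + pCons 0 (pderiv r) - smult (of_nat n) r) x / x ^ Suc n) (at x)"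
proof -
  have "((\<lambda>y. poly p y * ln y + poly r y / y ^ n) has_real_derivative
           poly (pderiv p) x * ln x + poly p x * (1 / x)
           + (poly (pderiv r) x * x ^ n - poly r x * (of_nat n * x ^ (n - 1))) / (x ^ n * x ^ n)) (at x)"
    using assms by (auto intro!: derivative_eq_intros poly_DERIV)
  moreover have "poly p x * (1 / x)
      + (poly (pderiv r) x * x ^ n - poly r x * (of_nat n * x ^ (n - 1))) / (x ^ n * x ^ n)
      = poly ([:0, 1:] ^ n * p + pCons 0 (pderiv r) - smult (of_nat n) r) x / x ^ Suc n"
    using assms by (cases n) (simp_all add: field_simps power_add)
  ultimately show ?thesis
    by (simp add: add.assoc)
qed

lemma higher_deriv_poly_times_ln:
  fixes p :: "real poly"
  assumes "0 < x"
  shows "(deriv ^^ j) (\<lambda>y. poly p y * ln y) x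
           = poly ((pderiv ^^ j) p) x * ln x + poly (ln_remainder p j) x / x ^ j"
  using assms
proof (induction j arbitrary: x)
  case 0
  then show ?case by simp
next
  case (Suc j)
  have "\<forall>\<^sub>F y in nhds x. (deriv ^^ j) (\<lambda>y. poly p y * ln y) y
          = poly ((pderiv ^^ j) p) y * ln y + poly (ln_remainder p j) y / y ^ j"
    using eventually_nhds_in_open[of "{0<..}" x] Suc by (auto elim!: eventually_mono)
  then have "(deriv ^^ Suc j) (\<lambda>y. poly p y * ln y) x
      = deriv (\<lambda>y. poly ((pderiv ^^ j) p) y * ln y + poly (ln_remainder p j) y / y ^ j) x"
    by (simp add: deriv_cong_ev)
  also have "\<dots> = poly (pderiv ((pderiv ^^ j) p)) x * ln x
                   + poly (ln_remainder p (Suc j)) x / x ^ Suc j"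
    unfolding ln_remainder.simps
    by (intro DERIV_imp_deriv has_real_derivative_poly_ln_plus_poly_div_power Suc.prems)
  finally show ?case
    by simp
qed

lemma siems_f_eq: "siems_f \<gamma> k z = poly (siems_B_poly \<gamma> k) z * ln z"
  by (simp add: siems_f_def siems_B_poly_def algebra_simps)

lemma siems_A_poly_eq:
  "siems_A_poly \<gamma> k =
     (\<Sum>j=1..k. smult (poly (ln_remainder (siems_B_poly \<gamma> k) j) 1 / fact j) ([:-1, 1:] ^ (j - 1)))"
  unfolding siems_A_poly_def siems_f_eq[abs_def] by (simp add: higher_deriv_poly_times_ln)

lemma siems_B_poly_6:
  "siems_B_poly \<gamma> 6 = [:0, (1-\<gamma>)^5, 5*\<gamma>*(1-\<gamma>)^4, 10*\<gamma>^2*(1-\<gamma>)^3, 10*\<gamma>^3*(1-\<gamma>)^2,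
                          5*\<gamma>^4*(1-\<gamma>), \<gamma>^5:]"
  by (simp add: siems_B_poly_def eval_nat_numeral algebra_simps)

lemma siems_C_poly_6:
  "siems_C_poly \<gamma> 6 = [:- (\<gamma>^5), (1-\<gamma>)^5 + 6*\<gamma>^5, 5*\<gamma>*(1-\<gamma>)^4 - 15*\<gamma>^5,
                          10*\<gamma>^2*(1-\<gamma>)^3 + 20*\<gamma>^5, 10*\<gamma>^3*(1-\<gamma>)^2 - 15*\<gamma>^5,
                          5*\<gamma>^4*(1-\<gamma>) + 6*\<gamma>^5:]"
  unfolding siems_C_poly_def siems_B_poly_6 by (simp add: eval_nat_numeral algebra_simps)

lemma siems_A_poly_6:
  "siems_A_poly \<gamma> 6 =
    [:1/6 - \<gamma> + 5/2*\<gamma>^2 - 10/3*\<gamma>^3 + 5/2*\<gamma>^4 - \<gamma>^5,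
      29/20 - 65/12*\<gamma> + 35/6*\<gamma>^2 + 5/3*\<gamma>^3 - 15/2*\<gamma>^4 + 5*\<gamma>^5,
      -21/20 + 10*\<gamma> - 70/3*\<gamma>^2 + 50/3*\<gamma>^3 + 5*\<gamma>^4 - 10*\<gamma>^5,
      37/60 - 5*\<gamma> + 20*\<gamma>^2 - 80/3*\<gamma>^3 + 5*\<gamma>^4 + 10*\<gamma>^5,
      -13/60 + 5/3*\<gamma> - 35/6*\<gamma>^2 + 40/3*\<gamma>^3 - 15/2*\<gamma>^4 - 5*\<gamma>^5,
      1/30 - 1/4*\<gamma> + 5/6*\<gamma>^2 - 5/3*\<gamma>^3 + 5/2*\<gamma>^4 + \<gamma>^5:]"
  unfolding siems_A_poly_eq siems_B_poly_6
  by (simp add: eval_nat_numeral fact_numeral pderiv_pCons field_simps)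

section \<open>Trigonometric polynomials with real coefficients\<close>

fun cheb_T :: "nat \<Rightarrow> real \<Rightarrow> real" where
  "cheb_T 0 x = 1"
| "cheb_T (Suc 0) x = x"
| "cheb_T (Suc (Suc n)) x = 2 * x * cheb_T (Suc n) x - cheb_T n x"

(* cheb_U n is the Chebyshev polynomial U_(n-1) of the second kind, shifted so that cheb_U 0 = 0. *)
fun cheb_U :: "nat \<Rightarrow> real \<Rightarrow> real" where
  "cheb_U 0 x = 0"
| "cheb_U (Suc 0) x = 1"
| "cheb_U (Suc (Suc n)) x = 2 * x * cheb_U (Suc n) x - cheb_U n x"

lemma cos_sin_mult_Suc_Suc:
  "cos (real (Suc (Suc n)) * t) = 2 * cos t * cos (real (Suc n) * t) - cos (real n * t)"
  "sin (real (Suc (Suc n)) * t) = 2 * cos t * sin (real (Suc n) * t) - sin (real n * t)"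
proof -
  have "real (Suc (Suc n)) * t = real (Suc n) * t + t" "real n * t = real (Suc n) * t - t"
    by (simp_all add: algebra_simps)
  then show "cos (real (Suc (Suc n)) * t) = 2 * cos t * cos (real (Suc n) * t) - cos (real n * t)"
    and "sin (real (Suc (Suc n)) * t) = 2 * cos t * sin (real (Suc n) * t) - sin (real n * t)"
    by (simp_all add: cos_add cos_diff sin_add sin_diff)
qed

lemma cos_mult_eq_cheb_T: "cos (real n * t) = cheb_T n (cos t)"
proof (induction n rule: induct_nat_012)
  case (ge2 n)
  then show ?case
    by (simp only: cos_sin_mult_Suc_Suc cheb_T.simps)
qed simp_all

lemma sin_mult_eq_cheb_U: "sin (real n * t) = sin t * cheb_U n (cos t)"
proof (induction n rule: induct_nat_012)
  case (ge2 n)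
  then show ?case
    by (simp only: cos_sin_mult_Suc_Suc cheb_U.simps) (simp add: algebra_simps)
qed simp_all

lemma exp_i_mult_eq_cheb:
  "exp (\<i> * of_nat n * of_real t) = Complex (cheb_T n (cos t)) (sin t * cheb_U n (cos t))"
  using cos_mult_eq_cheb_T[of n t] sin_mult_eq_cheb_U[of n t]
  by (simp add: complex_eq_iff Re_exp Im_exp mult.commute)

definition trig_sum :: "(nat \<Rightarrow> real) \<Rightarrow> nat \<Rightarrow> real \<Rightarrow> complex" where
  "trig_sum w n t = (\<Sum>j<n. of_real (w j) * exp (\<i> * of_nat j * of_real t))"

definition cos_part :: "(nat \<Rightarrow> real) \<Rightarrow> nat \<Rightarrow> real \<Rightarrow> real" where
  "cos_part w n x = (\<Sum>j<n. w j * cheb_T j x)"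

definition sin_part :: "(nat \<Rightarrow> real) \<Rightarrow> nat \<Rightarrow> real \<Rightarrow> real" where
  "sin_part w n x = (\<Sum>j<n. w j * cheb_U j x)"

definition trig_inner :: "(nat \<Rightarrow> real) \<Rightarrow> nat \<Rightarrow> (nat \<Rightarrow> real) \<Rightarrow> nat \<Rightarrow> real \<Rightarrow> real" where
  "trig_inner v m w n x =
     cos_part v m x * cos_part w n x + (1 - x\<^sup>2) * (sin_part v m x * sin_part w n x)"

lemma Re_trig_sum: "Re (trig_sum w n t) = cos_part w n (cos t)"
  and Im_trig_sum: "Im (trig_sum w n t) = sin t * sin_part w n (cos t)"
  unfolding trig_sum_def exp_i_mult_eq_cheb
  by (simp_all add: cos_part_def sin_part_def sum_distrib_left mult_ac)

lemma norm_trig_sum_squared: "(cmod (trig_sum w n t))\<^sup>2 = trig_inner w n w n (cos t)"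
  by (simp add: cmod_power2 Re_trig_sum Im_trig_sum trig_inner_def power_mult_distrib
      sin_squared_eq power2_eq_square[symmetric])

lemma Re_trig_sum_divide:
  "Re (trig_sum v m t / trig_sum w n t) = trig_inner v m w n (cos t) / trig_inner w n w n (cos t)"
proof -
  have "1 - cos t * cos t = sin t * sin t"
    using sin_cos_squared_add3[of t] by linarith
  then show ?thesis
    by (simp add: Re_divide Re_trig_sum Im_trig_sum trig_inner_def power2_eq_square mult_ac)
qed

lemma siems_a_eq_trig_sum: "siems_a \<gamma> k = trig_sum (siems_a_coef \<gamma> k) k"
  and siems_b_eq_trig_sum: "siems_b \<gamma> k = trig_sum (siems_b_coef \<gamma> k) (Suc k)"
  and siems_c_eq_trig_sum: "siems_c \<gamma> k = trig_sum (siems_c_coef \<gamma> k) k"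
  by (simp_all add: fun_eq_iff siems_a_def siems_b_def siems_c_def trig_sum_def lessThan_Suc_atMost)

section \<open>Polynomial certificates for SIEMS6\<close>

lemma poly_pCons_nonneg:
  fixes a x :: real
  assumes "0 \<le> a" "0 \<le> x" "0 \<le> poly p x"
  shows "0 \<le> poly (pCons a p) x"
  using assms by simp

lemma poly_pCons_pos:
  fixes a x :: real
  assumes "0 < a" "0 \<le> x" "0 \<le> poly p x"
  shows "0 < poly (pCons a p) x"
  using assms by (simp add: add_pos_nonneg)

lemma quadratic_form_nonneg:
  fixes a b c u v :: real
  assumes "0 \<le> a" "0 \<le> c" "b\<^sup>2 \<le> 4 * a * c"
  shows "0 \<le> a * u\<^sup>2 + b * u * v + c * v\<^sup>2"
proof (cases "a = 0")
  case True
  with assms show ?thesis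
    by simp
next
  case False
  have "4 * a * (a * u\<^sup>2 + b * u * v + c * v\<^sup>2) = (2 * a * u + b * v)\<^sup>2 + (4 * a * c - b\<^sup>2) * v\<^sup>2"
    by algebra
  also have "\<dots> \<ge> 0"
    using assms by simp
  finally show ?thesis
    using assms False by (simp add: zero_le_mult_iff)
qed

lemma siems6_denominator_pos:
  fixes \<gamma> :: real
  assumes "2 \<le> \<gamma>"
  shows "0 < 30*\<gamma>^5 - 50*\<gamma>^3 + 50*\<gamma>^2 - 20*\<gamma> + 3"
proof -
  have "30*\<gamma>^5 - 50*\<gamma>^3 + 50*\<gamma>^2 - 20*\<gamma> + 3 = poly [:723, 1980, 2150, 1150, 300, 30:] (\<gamma> - 2)"
    by simp algebra
  also have "\<dots> > 0"
    using assms by (intro poly_pCons_pos) simp_all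
  finally show ?thesis .
qed

lemma siems6_numerator_pos:
  fixes \<gamma> :: real
  assumes "2 \<le> \<gamma>"
  shows "0 < 32*\<gamma>^5 + 80*\<gamma>^4 - 80*\<gamma>^3 + 40*\<gamma>^2 - 10*\<gamma> + 1"
proof -
  have "32*\<gamma>^5 + 80*\<gamma>^4 - 80*\<gamma>^3 + 40*\<gamma>^2 - 10*\<gamma> + 1
          = poly [:1805, 4310, 4040, 1840, 400, 32:] (\<gamma> - 2)"
    by simp algebra
  also have "\<dots> > 0"
    using assms by (intro poly_pCons_pos) simp_all
  finally show ?thesis .
qed

lemma siems6_trig_inner_a_ge_one:
  fixes \<gamma> x :: real
  assumes "2 \<le> \<gamma>" "-1 \<le> x" "x \<le> 1"
  shows "1 \<le> trig_inner (siems_a_coef \<gamma> 6) 6 (siems_a_coef \<gamma> 6) 6 x"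
proof -
  define s where "s = \<gamma> - 2"
  define b0 b1 b2 where
    "b0 = poly [:14868711/800, 508992/5, 749792/3, 1085536/3, 3075296/9, 9882208/45, 874016/9,
                29120, 16960/3, 640, 32:] s"
    and "b1 = poly [:-1108333/600, -152771/24, -592987/72, -34196/9, 5153/3, 9158/3, 4820/3,
                    400, 40:] s"
    and "b2 = poly [:191731/720, 24467/24, 118019/72, 4250/3, 2080/3, 182, 20:] s"
  define q where "q = b0 * (1 - x)\<^sup>2 + b1 * (1 - x) * (1 + x) + b2 * (1 + x)\<^sup>2"
  have certificate: "trig_inner (siems_a_coef \<gamma> 6) 6 (siems_a_coef \<gamma> 6) 6 x - 1
     = (1 - x) * ((1 - x)\<^sup>2 * q + poly [:9167/360, 545/8, 1625/24, 30, 5:] s * (1 + x)^3 * (1 - x)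
                   + poly [:121/96, 15/8, 5/8:] s * (1 + x)^4)"
    unfolding q_def b0_def b1_def b2_def s_def trig_inner_def cos_part_def sin_part_def
      siems_a_coef_def siems_A_poly_6
    by (simp add: eval_nat_numeral) algebra
  (* b1 is the only Bernstein coefficient that is negative for small s; the quadratic form q
     absorbing it is nonnegative because its discriminant is nonpositive. *)
  have discriminant: "4 * b0 * b2 - b1\<^sup>2 =
      poly [:11797160065927/720000, 2314168697057/14400, 3163321376243/4320,
             44463331509391/21600, 172659942682997/43200, 4602804376373/810,
             9909853753921/1620, 4116473992877/810, 1332021773902/405, 44834362958/27,
             29255345602/45, 1750580032/9, 129967568/3, 20615840/3, 718400, 42496, 960:] s"
    unfolding b0_def b1_def b2_def by simp algebra
  have s: "0 \<le> s"
    using assms by (simp add: s_def)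
  have "0 \<le> b0" "0 \<le> b2"
    unfolding b0_def b2_def using s by (intro poly_pCons_nonneg; simp)+
  moreover have "0 \<le> 4 * b0 * b2 - b1\<^sup>2"
    unfolding discriminant using s by (intro poly_pCons_nonneg) simp_all
  ultimately have q: "0 \<le> q"
    unfolding q_def by (intro quadratic_form_nonneg) simp_all
  have "0 \<le> 1 + x"
    using assms by simp
  then have "0 \<le> trig_inner (siems_a_coef \<gamma> 6) 6 (siems_a_coef \<gamma> 6) 6 x - 1"
    unfolding certificate using assms s
    by (intro \<open>0 \<le> 1 + x\<close> q mult_nonneg_nonneg add_nonneg_nonneg zero_le_power poly_pCons_nonneg)
      simp_all
  then show ?thesis
    by simp
qed

lemma siems6_trig_inner_a_at_one: "trig_inner (siems_a_coef \<gamma> 6) 6 (siems_a_coef \<gamma> 6) 6 1 = 1"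
  unfolding trig_inner_def cos_part_def siems_a_coef_def siems_A_poly_6
  by (simp add: eval_nat_numeral)

lemma siems6_sigma_E_certificate:
  fixes \<gamma> x :: real
  defines "s \<equiv> \<gamma> - 2"
  shows "(15 * (32*\<gamma>^5 + 80*\<gamma>^4 - 80*\<gamma>^3 + 40*\<gamma>^2 - 10*\<gamma> + 1))\<^sup>2
            * trig_inner (siems_a_coef \<gamma> 6) 6 (siems_a_coef \<gamma> 6) 6 x
       - (16 * (30*\<gamma>^5 - 50*\<gamma>^3 + 50*\<gamma>^2 - 20*\<gamma> + 3))\<^sup>2
            * trig_inner (siems_c_coef \<gamma> 6) 6 (siems_c_coef \<gamma> 6) 6 x
     = (1 + x) *
       (poly [:10382860743729/32, 16380150136815/4, 90410162925295/4, 74504754075225,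
               333275226848945/2, 270608753319666, 332131696653600, 315783708704440,
               236026749127760, 139706836114400, 65562835837248, 24273991161600, 7006801936000,
               1544094707200, 250860646400, 28304640000, 1979136000, 64512000:] s * (1 - x)^4
      + poly [:591289452017/4, 10040762529905/8, 39767157620135/8, 12178188588335,
               41264004046655/2, 25594629546394, 24007852961000, 17331316209400, 9703511370400,
               4211172981600, 1404156631200, 352996710400, 64707612800, 8156352000, 631296000,
               22579200:] s * (1 + x) * (1 - x)^3
      + poly [:248131887155/16, 900734533715/8, 3011117584965/8, 766908726255, 2124500609085/2,
               1055790791600, 774325777400, 424044150800, 173276184800, 52136661600, 11215862880,
               1631424000, 143568000, 5760000:] s * (1 + x)\<^sup>2 * (1 - x)\<^sup>2
      + poly [:3401252115/4, 40418589615/8, 108828811305/8, 21899413575, 46812554625/2,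
               17427509700, 9215878100, 3457521200, 900638000, 154860000, 15782400,
               720000:] s * (1 + x)^3 * (1 - x)
      + poly [:599237001/32, 691962255/8, 1415402925/8, 210151050, 159553225, 80179960, 26619100,
               5616000, 681000, 36000:] s * (1 + x)^4)"
  unfolding s_def trig_inner_def cos_part_def sin_part_def siems_a_coef_def siems_c_coef_def
    siems_A_poly_6 siems_C_poly_6
  by (simp add: eval_nat_numeral) algebra

lemma siems6_lambda_I_certificate:
  fixes \<gamma> x :: real
  defines "s \<equiv> \<gamma> - 2"
  shows "16 * (30*\<gamma>^5 - 50*\<gamma>^3 + 50*\<gamma>^2 - 20*\<gamma> + 3)
            * trig_inner (siems_b_coef \<gamma> 6) 7 (siems_a_coef \<gamma> 6) 6 x
       - 15 * (2*\<gamma> - 1)^5 * trig_inner (siems_a_coef \<gamma> 6) 6 (siems_a_coef \<gamma> 6) 6 x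
     = (1 + x) *
       (poly [:535305591/160, 563782599/16, 1240565571/8, 1569035811/4, 1294686879/2,
               3710358702/5, 609863670, 363625360, 156582440, 142786480/3, 9709760, 1195200,
               67200:] s * (1 - x)^4
      + poly [:6983919/4, 90163671/8, 262466619/8, 226801155/4, 64410115, 50243284, 81752510/3,
               30438760/3, 2481600, 360000, 23520:] s * (1 + x) * (1 - x)^3
      + poly [:15480789/80, 3997437/4, 18078215/8, 11690255/4, 7094125/3, 1225872, 397650, 73800,
               6000:] s * (1 + x)\<^sup>2 * (1 - x)\<^sup>2
      + poly [:43933/4, 334905/8, 1599295/24, 680575/12, 27225, 6990, 750:] s * (1 + x)^3 * (1 - x)
      + poly [:7923/32, 9765/16, 2275/4, 475/2, 75/2:] s * (1 + x)^4)"
  unfolding s_def trig_inner_def cos_part_def sin_part_def siems_a_coef_def siems_b_coef_def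
    siems_A_poly_6 siems_B_poly_6
  by (simp add: eval_nat_numeral) algebra

lemma cSUP_eq_attained:
  fixes f :: "'a \<Rightarrow> real"
  assumes "\<And>x. x \<in> A \<Longrightarrow> f x \<le> M" "a \<in> A" "f a = M"
  shows "(SUP x\<in>A. f x) = M"
  using assms by (intro cSup_eq_maximum) auto

lemma cINF_eq_attained:
  fixes f :: "'a \<Rightarrow> real"
  assumes "\<And>x. x \<in> A \<Longrightarrow> M \<le> f x" "a \<in> A" "f a = M"
  shows "(INF x\<in>A. f x) = M"
  using assms by (intro cInf_eq_minimum) auto

lemma siems6_norm_a_ge_one:
  assumes "2 \<le> \<gamma>"
  shows "1 \<le> cmod (siems_a \<gamma> 6 \<theta>)"
proof (rule power2_le_imp_le)
  show "1\<^sup>2 \<le> (cmod (siems_a \<gamma> 6 \<theta>))\<^sup>2"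
    unfolding siems_a_eq_trig_sum norm_trig_sum_squared
    using siems6_trig_inner_a_ge_one[OF assms cos_ge_minus_one cos_le_one] by simp
qed simp

lemma siems6_norm_a_at_zero: "cmod (siems_a \<gamma> 6 0) = 1"
proof -
  have "(cmod (siems_a \<gamma> 6 0))\<^sup>2 = 1\<^sup>2"
    unfolding siems_a_eq_trig_sum norm_trig_sum_squared by (simp add: siems6_trig_inner_a_at_one)
  then show ?thesis
    by (rule power2_eq_imp_eq) simp_all
qed

lemma siems6_norm_c_div_a:
  fixes \<gamma> \<theta> :: real
  assumes \<gamma>: "2 \<le> \<gamma>"
  defines "M \<equiv> 15 * (32*\<gamma>^5 + 80*\<gamma>^4 - 80*\<gamma>^3 + 40*\<gamma>^2 - 10*\<gamma> + 1)
                 / (16 * (30*\<gamma>^5 - 50*\<gamma>^3 + 50*\<gamma>^2 - 20*\<gamma> + 3))"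
  shows "cmod (siems_c \<gamma> 6 \<theta> / siems_a \<gamma> 6 \<theta>) \<le> M"
    and "cmod (siems_c \<gamma> 6 pi / siems_a \<gamma> 6 pi) = M"
proof -
  define N D where "N = 32*\<gamma>^5 + 80*\<gamma>^4 - 80*\<gamma>^3 + 40*\<gamma>^2 - 10*\<gamma> + 1"
    and "D = 30*\<gamma>^5 - 50*\<gamma>^3 + 50*\<gamma>^2 - 20*\<gamma> + 3"
  define Ia Ic where "Ia x = trig_inner (siems_a_coef \<gamma> 6) 6 (siems_a_coef \<gamma> 6) 6 x"
    and "Ic x = trig_inner (siems_c_coef \<gamma> 6) 6 (siems_c_coef \<gamma> 6) 6 x" for x
  have "0 < N" "0 < D"
    unfolding N_def D_def using \<gamma> by (simp_all add: siems6_numerator_pos siems6_denominator_pos)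
  then have M: "M = 15 * N / (16 * D)" "0 \<le> M"
    by (simp_all add: M_def N_def D_def)
  have ratio: "(cmod (siems_c \<gamma> 6 t / siems_a \<gamma> 6 t))\<^sup>2 = Ic (cos t) / Ia (cos t)" for t
    by (simp add: norm_divide power_divide siems_a_eq_trig_sum siems_c_eq_trig_sum
        norm_trig_sum_squared Ia_def Ic_def)
  have Ia_pos: "0 < Ia (cos t)" for t
    using siems6_trig_inner_a_ge_one[OF \<gamma> cos_ge_minus_one[of t] cos_le_one[of t]]
    unfolding Ia_def by linarith
  have bound: "(16 * D)\<^sup>2 * Ic x \<le> (15 * N)\<^sup>2 * Ia x" if "-1 \<le> x" "x \<le> 1" for x
  proof -
    have "0 \<le> 1 + x" "0 \<le> \<gamma> - 2"
      using that \<gamma> by simp_all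
    then have "0 \<le> (15 * N)\<^sup>2 * Ia x - (16 * D)\<^sup>2 * Ic x"
      unfolding N_def D_def Ia_def Ic_def siems6_sigma_E_certificate using that
      by (intro \<open>0 \<le> 1 + x\<close> mult_nonneg_nonneg add_nonneg_nonneg zero_le_power
          poly_pCons_nonneg) simp_all
    then show ?thesis
      by simp
  qed
  have attained: "(16 * D)\<^sup>2 * Ic (-1) = (15 * N)\<^sup>2 * Ia (-1)"
    using siems6_sigma_E_certificate[of \<gamma> "-1"] by (simp add: N_def D_def Ia_def Ic_def)
  show "cmod (siems_c \<gamma> 6 \<theta> / siems_a \<gamma> 6 \<theta>) \<le> M"
  proof (rule power2_le_imp_le)
    show "(cmod (siems_c \<gamma> 6 \<theta> / siems_a \<gamma> 6 \<theta>))\<^sup>2 \<le> M\<^sup>2"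
      using bound[OF cos_ge_minus_one cos_le_one] Ia_pos[of \<theta>] \<open>0 < D\<close>
      by (simp add: ratio M power_divide field_simps)
  qed (rule M(2))
  show "cmod (siems_c \<gamma> 6 pi / siems_a \<gamma> 6 pi) = M"
  proof (rule power2_eq_imp_eq)
    show "(cmod (siems_c \<gamma> 6 pi / siems_a \<gamma> 6 pi))\<^sup>2 = M\<^sup>2"
      using attained Ia_pos[of pi] \<open>0 < D\<close>
      by (simp add: ratio M power_divide field_simps)
  qed (simp_all add: M(2))
qed

lemma siems6_Re_b_div_a:
  fixes \<gamma> \<theta> :: real
  assumes \<gamma>: "2 \<le> \<gamma>"
  defines "L \<equiv> 15 * (2*\<gamma> - 1)^5 / (16 * (30*\<gamma>^5 - 50*\<gamma>^3 + 50*\<gamma>^2 - 20*\<gamma> + 3))"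
  shows "L \<le> Re (siems_b \<gamma> 6 \<theta> / siems_a \<gamma> 6 \<theta>)"
    and "Re (siems_b \<gamma> 6 pi / siems_a \<gamma> 6 pi) = L"
proof -
  define D where "D = 30*\<gamma>^5 - 50*\<gamma>^3 + 50*\<gamma>^2 - 20*\<gamma> + 3"
  define Ia Iba where "Ia x = trig_inner (siems_a_coef \<gamma> 6) 6 (siems_a_coef \<gamma> 6) 6 x"
    and "Iba x = trig_inner (siems_b_coef \<gamma> 6) 7 (siems_a_coef \<gamma> 6) 6 x" for x
  have "0 < D"
    unfolding D_def using \<gamma> by (rule siems6_denominator_pos)
  have L: "L = 15 * (2*\<gamma> - 1)^5 / (16 * D)"
    by (simp add: L_def D_def)
  have ratio: "Re (siems_b \<gamma> 6 t / siems_a \<gamma> 6 t) = Iba (cos t) / Ia (cos t)" for t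
    by (simp add: siems_a_eq_trig_sum siems_b_eq_trig_sum Re_trig_sum_divide Ia_def Iba_def)
  have Ia_pos: "0 < Ia (cos t)" for t
    using siems6_trig_inner_a_ge_one[OF \<gamma> cos_ge_minus_one[of t] cos_le_one[of t]]
    unfolding Ia_def by linarith
  have bound: "15 * (2*\<gamma> - 1)^5 * Ia x \<le> 16 * D * Iba x" if "-1 \<le> x" "x \<le> 1" for x
  proof -
    have "0 \<le> 1 + x" "0 \<le> \<gamma> - 2"
      using that \<gamma> by simp_all
    then have "0 \<le> 16 * D * Iba x - 15 * (2*\<gamma> - 1)^5 * Ia x"
      unfolding D_def Ia_def Iba_def siems6_lambda_I_certificate using that
      by (intro \<open>0 \<le> 1 + x\<close> mult_nonneg_nonneg add_nonneg_nonneg zero_le_power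
          poly_pCons_nonneg) simp_all
    then show ?thesis
      by simp
  qed
  have attained: "15 * (2*\<gamma> - 1)^5 * Ia (-1) = 16 * D * Iba (-1)"
    using siems6_lambda_I_certificate[of \<gamma> "-1"] by (simp add: D_def Ia_def Iba_def)
  show "L \<le> Re (siems_b \<gamma> 6 \<theta> / siems_a \<gamma> 6 \<theta>)"
    using bound[OF cos_ge_minus_one cos_le_one] Ia_pos[of \<theta>] \<open>0 < D\<close>
    by (simp add: ratio L field_simps)
  show "Re (siems_b \<gamma> 6 pi / siems_a \<gamma> 6 pi) = L"
    using attained Ia_pos[of pi] \<open>0 < D\<close>
    by (simp add: ratio L field_simps)
qed

theorem mainTheorem13:
  fixes \<gamma> :: real
  assumes "2 \<le> \<gamma>" and "\<gamma> \<le> 17"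
  shows "(\<forall>\<theta>. siems_a \<gamma> 6 \<theta> \<noteq> 0)
    \<and> sigma_F \<gamma> 6 = 1
    \<and> sigma_E \<gamma> 6 = 15 * (32*\<gamma>^5 + 80*\<gamma>^4 - 80*\<gamma>^3 + 40*\<gamma>^2 - 10*\<gamma> + 1)
                     / (16 * (30*\<gamma>^5 - 50*\<gamma>^3 + 50*\<gamma>^2 - 20*\<gamma> + 3))
    \<and> lambda_I \<gamma> 6 = 15 * (2*\<gamma> - 1)^5
                     / (16 * (30*\<gamma>^5 - 50*\<gamma>^3 + 50*\<gamma>^2 - 20*\<gamma> + 3))
    \<and> I_IE \<gamma> 6 = (2*\<gamma> - 1)^5 / (32*\<gamma>^5 + 80*\<gamma>^4 - 80*\<gamma>^3 + 40*\<gamma>^2 - 10*\<gamma> + 1)"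
proof -
  note norm_a = siems6_norm_a_ge_one[OF assms(1)]
  have sigma_F: "sigma_F \<gamma> 6 = 1"
    unfolding sigma_F_def
    by (rule cSUP_eq_attained[where a = 0])
      (use norm_a in \<open>simp_all add: norm_divide divide_le_eq_1 siems6_norm_a_at_zero\<close>)
  have sigma_E: "sigma_E \<gamma> 6 = 15 * (32*\<gamma>^5 + 80*\<gamma>^4 - 80*\<gamma>^3 + 40*\<gamma>^2 - 10*\<gamma> + 1)
                     / (16 * (30*\<gamma>^5 - 50*\<gamma>^3 + 50*\<gamma>^2 - 20*\<gamma> + 3))"
    unfolding sigma_E_def
    by (rule cSUP_eq_attained[OF siems6_norm_c_div_a(1)[OF assms(1)], where a = pi])
      (simp_all add: siems6_norm_c_div_a(2)[OF assms(1)])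
  have lambda_I: "lambda_I \<gamma> 6 = 15 * (2*\<gamma> - 1)^5
                     / (16 * (30*\<gamma>^5 - 50*\<gamma>^3 + 50*\<gamma>^2 - 20*\<gamma> + 3))"
    unfolding lambda_I_def
    by (rule cINF_eq_attained[OF siems6_Re_b_div_a(1)[OF assms(1)], where a = pi])
      (simp_all add: siems6_Re_b_div_a(2)[OF assms(1)])
  have cancel: "(15 * y / (16 * d)) / (15 * n / (16 * d)) = y / n" if "d \<noteq> 0" for y n d :: real
    using that by simp
  have "I_IE \<gamma> 6 = (2*\<gamma> - 1)^5 / (32*\<gamma>^5 + 80*\<gamma>^4 - 80*\<gamma>^3 + 40*\<gamma>^2 - 10*\<gamma> + 1)"
    unfolding I_IE_def sigma_E lambda_I
    by (rule cancel) (use siems6_denominator_pos[OF assms(1)] in simp)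
  moreover have "siems_a \<gamma> 6 \<theta> \<noteq> 0" for \<theta>
    using norm_a[of \<theta>] by auto
  ultimately show ?thesis
    using sigma_F sigma_E lambda_I by blast
qed

end
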